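(* Let $k,r\geq 1$, let $1\le d\le r$, and let $I_d\subseteq\{1,\dots,r\}$ with $|I_d|=d$. Then for every $n\geq k$, $$\Bigl|S_n^{(r)}\Bigl(\bigcup_{m=1}^{k}T_{k,r}^m(I_d)\Bigr)\Bigr|=r^{k-1}(r-d)^{n+1-k}\,n!.$$
   Context: For $n,r\ge1$, $S_n^{(r)}$ denotes the set of coloured permutations of length $n$ with $r$ colours: sequences $\phi=(\phi_1,\dots,\phi_n)$ where $\phi_i=a_i^{(c_i)}$, $(a_1,\dots,a_n)$ is a permutation of $\{1,\dots,n\}$ and each $c_i\in\{1,\dots,r\}$ is the colour of $a_i$. For $\phi=(\tau_1^{(s_1)},\dots,\tau_k^{(s_k)})\in S_k^{(r)}$ and $\psi=(\alpha_1^{(v_1)},\dots,\alpha_n^{(v_n)})\in S_n^{(r)}$, an occurrence of $\phi$ in $\psi$ is a sequence of indices $1\le i_1<\dots<i_k\le n$ such that $(\alpha_{i_1},\dots,\alpha_{i_k})$ is order-isomorphic to $(\tau_1,\dots,\tau_k)$ and $v_{i_j}=s_j$ for all $j$. $\psi$ contains $\phi$ if there is at least one occurrence, and avoids $\phi$ otherwise. For a set $T$ of coloured patterns, $S_n^{(r)}(T)$ is the set of $\psi\in S_n^{(r)}$ avoiding every $\phi\in T$. For $I_d\subseteq\{1,\dots,r\}$ with $|I_d|=d$ and $1\le m\le k$, $T_{k,r}^m(I_d)$ is the set of all $\phi\in S_k^{(r)}$ whose first entry is $\phi_1=m^{(c)}$ for some colour $c\in I_d$. *)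

theory Defs
  imports Main
begin

text \<open>A coloured permutation of length n with r colours is a list of pairs (a_i, c_i):
  the first components form a permutation of {1..n}, the colours lie in {1..r}.
  Positions are 0-based list indices.\<close>

definition colperms :: "nat \<Rightarrow> nat \<Rightarrow> (nat \<times> nat) list set" where
  "colperms n r = {xs. length xs = n \<and> distinct (map fst xs) \<and> set (map fst xs) = {1..n}
                      \<and> (\<forall>c \<in> set (map snd xs). 1 \<le> c \<and> c \<le> r)}"

definition occurrence :: "(nat \<times> nat) list \<Rightarrow> (nat \<times> nat) list \<Rightarrow> (nat \<Rightarrow> nat) \<Rightarrow> bool" where
  "occurrence phi psi f \<longleftrightarrow>
     strict_mono_on {0..<length phi} f \<and>
     (\<forall>j < length phi. f j < length psi) \<and>
     (\<forall>i < length phi. \<forall>j < length phi.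
        fst (psi ! f i) < fst (psi ! f j) \<longleftrightarrow> fst (phi ! i) < fst (phi ! j)) \<and>
     (\<forall>j < length phi. snd (psi ! f j) = snd (phi ! j))"

definition contains :: "(nat \<times> nat) list \<Rightarrow> (nat \<times> nat) list \<Rightarrow> bool" where
  "contains psi phi \<longleftrightarrow> (\<exists>f. occurrence phi psi f)"

definition avoiding :: "nat \<Rightarrow> nat \<Rightarrow> (nat \<times> nat) list set \<Rightarrow> (nat \<times> nat) list set" where
  "avoiding n r T = {psi \<in> colperms n r. \<forall>phi \<in> T. \<not> contains psi phi}"

definition Tset :: "nat \<Rightarrow> nat \<Rightarrow> nat \<Rightarrow> nat set \<Rightarrow> (nat \<times> nat) list set" where
  "Tset k r m I = {phi \<in> colperms k r. \<exists>c \<in> I. phi ! 0 = (m, c)}"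

end

theory Submission
  imports Defs "HOL-Combinatorics.Multiset_Permutations"
begin

text \<open>A coloured permutation avoids every pattern whose first entry has a colour in \<open>I\<close>
  exactly when none of its first \<open>n + 1 - k\<close> entries has a colour in \<open>I\<close>: an occurrence
  of a pattern of length \<open>k\<close> must start at one of these positions, and conversely the
  standardization of the window of length \<open>k\<close> starting at such a position is a forbidden
  pattern occurring in it. Counting is then a product: \<open>n!\<close> underlying permutations,
  \<open>r - d\<close> colours at each of the first \<open>n + 1 - k\<close> positions and \<open>r\<close> colours at the
  remaining \<open>k - 1\<close>.\<close>

definition rank_in :: "nat set \<Rightarrow> nat \<Rightarrow> nat" where
  "rank_in W x = Suc (card {z \<in> W. z < x})"

lemma rank_in_strict_mono:
  assumes "finite W" "x \<in> W" "y \<in> W" "x < y"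
  shows "rank_in W x < rank_in W y"
proof -
  have "{z \<in> W. z < x} \<subset> {z \<in> W. z < y}" using assms by auto
  then show ?thesis unfolding rank_in_def using assms(1) by (simp add: psubset_card_mono)
qed

lemma rank_in_less_iff:
  assumes "finite W" "x \<in> W" "y \<in> W"
  shows "rank_in W x < rank_in W y \<longleftrightarrow> x < y"
  using assms rank_in_strict_mono by (metis linorder_neq_iff order_less_asym)

lemma inj_on_rank_in: "finite W \<Longrightarrow> inj_on (rank_in W) W"
  by (metis inj_onI linorder_neq_iff order_less_irrefl rank_in_strict_mono)

lemma rank_in_image:
  assumes "finite W"
  shows "rank_in W ` W = {1..card W}"
proof -
  have "card {z \<in> W. z < x} < card W" if "x \<in> W" for x
    using that assms by (intro psubset_card_mono) auto
  then have "rank_in W ` W \<subseteq> {1..card W}" unfolding rank_in_def by (auto simp: Suc_le_eq)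
  moreover have "card (rank_in W ` W) = card {1..card W}"
    using card_image[OF inj_on_rank_in[OF assms]] by simp
  ultimately show ?thesis by (simp add: card_subset_eq)
qed

definition standardize :: "(nat \<times> nat) list \<Rightarrow> (nat \<times> nat) list" where
  "standardize w = map (\<lambda>(a, c). (rank_in (fst ` set w) a, c)) w"

lemma length_standardize [simp]: "length (standardize w) = length w"
  by (simp add: standardize_def)

lemma standardize_in_colperms:
  assumes "distinct (map fst w)" and "\<forall>c \<in> set (map snd w). 1 \<le> c \<and> c \<le> r"
  shows "standardize w \<in> colperms (length w) r"
proof -
  let ?W = "fst ` set w"
  have fst_std: "map fst (standardize w) = map (rank_in ?W) (map fst w)"
    unfolding standardize_def by (induction w) auto
  have snd_std: "map snd (standardize w) = map snd w"
    unfolding standardize_def by (induction w) auto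
  have "card ?W = length w"
    using distinct_card[OF assms(1)] by simp
  moreover have "distinct (map fst (standardize w))"
    unfolding fst_std using assms(1) inj_on_rank_in[of ?W] by (simp add: distinct_map comp_inj_on)
  ultimately show ?thesis
    using rank_in_image[of ?W] assms(2)
    unfolding colperms_def mem_Collect_eq fst_std snd_std by (simp add: image_image)
qed

lemma occurrence_standardize_window:
  assumes "i + k \<le> length psi"
  shows "occurrence (standardize (take k (drop i psi))) psi ((+) i)"
proof -
  let ?w = "take k (drop i psi)"
  let ?W = "fst ` set ?w"
  have length_w: "length ?w = k" using assms by simp
  have nth_w: "?w ! j = psi ! (i + j)" if "j < k" for j
    using that assms by simp
  have in_W: "fst (psi ! (i + j)) \<in> ?W" if "j < k" for j
    using that length_w nth_w nth_mem[of j ?w] by (metis image_eqI)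
  have nth_std: "standardize ?w ! j = (rank_in ?W (fst (psi ! (i + j))), snd (psi ! (i + j)))"
    if "j < k" for j
    using that length_w nth_w unfolding standardize_def by (simp split: prod.split)
  show ?thesis
    unfolding occurrence_def length_standardize length_w
    using assms nth_std in_W rank_in_less_iff[of ?W] by (auto simp: strict_mono_on_def)
qed

lemma contains_window_pattern:
  assumes psi: "psi \<in> colperms n r" and "0 < k" and "i + k \<le> n"
  shows "\<exists>phi \<in> colperms k r. snd (phi ! 0) = snd (psi ! i) \<and> contains psi phi"
proof
  let ?w = "take k (drop i psi)"
  have "length psi = n" and "distinct (map fst psi)"
    and colours: "\<forall>c \<in> set (map snd psi). 1 \<le> c \<and> c \<le> r"
    using psi unfolding colperms_def by auto
  have "distinct (map fst ?w)"
    using \<open>distinct (map fst psi)\<close> by (simp flip: take_map drop_map)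
  moreover have "\<forall>c \<in> set (map snd ?w). 1 \<le> c \<and> c \<le> r"
    using colours by (auto dest: in_set_takeD in_set_dropD)
  ultimately have "standardize ?w \<in> colperms (length ?w) r"
    by (rule standardize_in_colperms)
  then show "standardize ?w \<in> colperms k r"
    using assms \<open>length psi = n\<close> by simp
  show "snd (standardize ?w ! 0) = snd (psi ! i) \<and> contains psi (standardize ?w)"
    using assms \<open>length psi = n\<close> occurrence_standardize_window[of i k psi]
    unfolding contains_def by (auto simp: standardize_def split: prod.splits)
qed

lemma strict_mono_on_nat_add_le:
  fixes f :: "nat \<Rightarrow> nat"
  assumes "strict_mono_on {0..<k} f" and "j < k"
  shows "f 0 + j \<le> f j"
  using assms(2)
proof (induction j)
  case (Suc j)
  then have "f j < f (Suc j)" using assms(1) by (simp add: strict_mono_on_def)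
  then show ?case using Suc by simp
qed simp

lemma occurrence_start_bound:
  assumes "occurrence phi psi f" and "phi \<noteq> []"
  shows "f 0 + length phi \<le> length psi"
proof -
  let ?k = "length phi"
  have "f 0 + (?k - 1) \<le> f (?k - 1)" and "f (?k - 1) < length psi"
    using assms strict_mono_on_nat_add_le[of ?k f "?k - 1"] unfolding occurrence_def by auto
  then show ?thesis using assms(2) by simp
qed

lemma Union_Tset_eq:
  assumes "0 < k"
  shows "(\<Union>m\<in>{1..k}. Tset k r m I) = {phi \<in> colperms k r. snd (phi ! 0) \<in> I}"
proof -
  have "fst (phi ! 0) \<in> {1..k}" if "phi \<in> colperms k r" for phi
    using that assms nth_mem[of 0 "map fst phi"] unfolding colperms_def by auto
  then show ?thesis unfolding Tset_def by (force simp: prod_eq_iff)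
qed

lemma avoiding_first_colour_iff:
  assumes "0 < k" and "k \<le> n"
  shows "avoiding n r {phi \<in> colperms k r. snd (phi ! 0) \<in> I}
    = {psi \<in> colperms n r. set (take (n + 1 - k) (map snd psi)) \<inter> I = {}}"
    (is "?Avoiding = ?Good")
proof (intro set_eqI iffI)
  fix psi assume "psi \<in> ?Avoiding"
  then have psi: "psi \<in> colperms n r"
    and avoids: "\<And>phi. phi \<in> colperms k r \<Longrightarrow> snd (phi ! 0) \<in> I \<Longrightarrow> \<not> contains psi phi"
    unfolding avoiding_def by auto
  have "snd (psi ! i) \<notin> I" if "i < n + 1 - k" for i
    using contains_window_pattern[OF psi \<open>0 < k\<close>, of i] avoids that by fastforce
  moreover have "length psi = n" using psi unfolding colperms_def by simp
  ultimately show "psi \<in> ?Good"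
    using psi by (auto simp: in_set_conv_nth)
next
  fix psi assume "psi \<in> ?Good"
  then have psi: "psi \<in> colperms n r" and good: "set (take (n + 1 - k) (map snd psi)) \<inter> I = {}"
    by auto
  have "\<not> contains psi phi" if "phi \<in> colperms k r" "snd (phi ! 0) \<in> I" for phi
  proof
    assume "contains psi phi"
    then obtain f where f: "occurrence phi psi f" unfolding contains_def by blast
    have "length phi = k" "length psi = n" using that psi unfolding colperms_def by auto
    with f assms have "f 0 < n + 1 - k" and "snd (psi ! f 0) = snd (phi ! 0)"
      using occurrence_start_bound[OF f] unfolding occurrence_def by auto
    then have "snd (phi ! 0) \<in> set (take (n + 1 - k) (map snd psi))"
      using \<open>length psi = n\<close> \<open>0 < k\<close> by (auto simp: in_set_conv_nth intro!: exI[of _ "f 0"])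
    then show False using good that(2) by blast
  qed
  then show "psi \<in> ?Avoiding"
    using psi unfolding avoiding_def by blast
qed

lemma colperms_iff_permutation:
  "psi \<in> colperms n r \<longleftrightarrow>
     map fst psi \<in> permutations_of_set {1..n} \<and> set (map snd psi) \<subseteq> {1..r}"
  using length_finite_permutations_of_set[of "map fst psi" "{1..n}"]
  unfolding colperms_def permutations_of_set_def by auto

lemma card_colperms_with_colours:
  "card {psi \<in> colperms n r. P (map snd psi)}
     = fact n * card {cs. set cs \<subseteq> {1..r} \<and> length cs = n \<and> P cs}"
proof -
  let ?A = "{psi \<in> colperms n r. P (map snd psi)}"
  let ?Perms = "permutations_of_set {1..n}"
  let ?C = "{cs. set cs \<subseteq> {1..r} \<and> length cs = n \<and> P cs}"
  let ?split = "\<lambda>psi. (map fst psi, map snd psi)" and ?join = "\<lambda>(p, cs). zip p cs"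
  have length_perm: "length p = n" if "p \<in> ?Perms" for p
    using length_finite_permutations_of_set[OF that] by simp
  have "bij_betw ?split ?A (?Perms \<times> ?C)"
  proof (rule bij_betw_byWitness[where f' = ?join])
    show "\<forall>psi \<in> ?A. ?join (?split psi) = psi"
      by (simp add: zip_map_fst_snd)
    show "\<forall>pc \<in> ?Perms \<times> ?C. ?split (?join pc) = pc"
      using length_perm by auto
    show "?split ` ?A \<subseteq> ?Perms \<times> ?C"
      using length_perm[of "map fst psi" for psi] by (auto simp: colperms_iff_permutation)
    show "?join ` (?Perms \<times> ?C) \<subseteq> ?A"
    proof
      fix psi assume "psi \<in> ?join ` (?Perms \<times> ?C)"
      then obtain p cs where p: "p \<in> ?Perms" and cs: "cs \<in> ?C" and psi: "psi = zip p cs"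
        by auto
      then have "length p = length cs" using length_perm by simp
      then have "map fst psi = p" and "map snd psi = cs" unfolding psi by simp_all
      with p cs show "psi \<in> ?A"
        unfolding mem_Collect_eq colperms_iff_permutation by simp
    qed
  qed
  then show ?thesis
    by (simp add: bij_betw_same_card card_cartesian_product)
qed

lemma card_lists_prefix_suffix:
  assumes "finite A" and "finite B"
  shows "card {xs. length xs = a + b \<and> set (take a xs) \<subseteq> A \<and> set (drop a xs) \<subseteq> B}
           = card A ^ a * card B ^ b"
proof -
  let ?La = "{u. set u \<subseteq> A \<and> length u = a}" and ?Lb = "{v. set v \<subseteq> B \<and> length v = b}"
  let ?S = "{xs. length xs = a + b \<and> set (take a xs) \<subseteq> A \<and> set (drop a xs) \<subseteq> B}"
  let ?split = "\<lambda>xs. (take a xs, drop a xs)" and ?join = "\<lambda>(u, v). u @ v"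
  have "bij_betw ?split ?S (?La \<times> ?Lb)"
  proof (rule bij_betw_byWitness[where f' = ?join])
    show "\<forall>xs \<in> ?S. ?join (?split xs) = xs"
      by simp
    show "\<forall>uv \<in> ?La \<times> ?Lb. ?split (?join uv) = uv"
      by auto
    show "?split ` ?S \<subseteq> ?La \<times> ?Lb"
      by auto
    show "?join ` (?La \<times> ?Lb) \<subseteq> ?S"
      by auto
  qed
  then show ?thesis
    using card_lists_length_eq[OF assms(1)] card_lists_length_eq[OF assms(2)]
    by (simp add: bij_betw_same_card card_cartesian_product)
qed

lemma card_colour_words_avoiding_prefix:
  assumes "I \<subseteq> {1..r}" and "j \<le> n"
  shows "card {cs. set cs \<subseteq> {1..r} \<and> length cs = n \<and> set (take j cs) \<inter> I = {}}
           = (r - card I) ^ j * r ^ (n - j)"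
proof -
  have "set cs \<subseteq> {1..r} \<and> length cs = n \<and> set (take j cs) \<inter> I = {} \<longleftrightarrow>
        length cs = j + (n - j) \<and> set (take j cs) \<subseteq> {1..r} - I \<and> set (drop j cs) \<subseteq> {1..r}"
    for cs :: "nat list"
  proof -
    have "set cs \<subseteq> {1..r} \<longleftrightarrow> set (take j cs) \<subseteq> {1..r} \<and> set (drop j cs) \<subseteq> {1..r}"
      by (metis append_take_drop_id set_append Un_subset_iff)
    then show ?thesis using assms by auto
  qed
  moreover have "card ({1..r} - I) = r - card I"
    using assms(1) by (simp add: card_Diff_subset finite_subset)
  ultimately show ?thesis by (simp add: card_lists_prefix_suffix)
qed

theorem mainTheorem3:
  fixes k r d n :: nat and I :: "nat set"
  assumes "k \<ge> 1" and "r \<ge> 1" and "1 \<le> d" and "d \<le> r"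
    and "I \<subseteq> {1..r}" and "card I = d" and "n \<ge> k"
  shows "card (avoiding n r (\<Union>m\<in>{1..k}. Tset k r m I))
           = r ^ (k - 1) * (r - d) ^ (n + 1 - k) * fact n"
proof -
  have "0 < k" using assms(1) by simp
  have "card (avoiding n r (\<Union>m\<in>{1..k}. Tset k r m I))
          = card {psi \<in> colperms n r. set (take (n + 1 - k) (map snd psi)) \<inter> I = {}}"
    using Union_Tset_eq[OF \<open>0 < k\<close>] avoiding_first_colour_iff[OF \<open>0 < k\<close> assms(7)] by simp
  also have "\<dots> = fact n * card {cs. set cs \<subseteq> {1..r} \<and> length cs = n
                                   \<and> set (take (n + 1 - k) cs) \<inter> I = {}}"
    by (rule card_colperms_with_colours)
  also have "\<dots> = fact n * ((r - d) ^ (n + 1 - k) * r ^ (n - (n + 1 - k)))"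
    using card_colour_words_avoiding_prefix[OF assms(5), of "n + 1 - k" n] assms(6) \<open>0 < k\<close>
    by simp
  also have "n - (n + 1 - k) = k - 1" using assms(1,7) by simp
  finally show ?thesis by simp
qed

end
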